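(* For $\beta>0$, $r\ge 0$ and $z\in\mathbb{C}$, \[ \sum_{k=0}^\infty\frac{He_k(z)\,(-r)^k}{\Gamma(\beta+k/2)\,k!}=\sum_{k=0}^\infty\frac{{}_0F_1(\beta+k/2;\,-r^2/2)\,(-rz)^k}{\Gamma(\beta+k/2)\,k!}. \] Moreover, for fixed $z$, the function $x\mapsto x^{\beta-1}K_\beta(\sqrt x,z)$ ($x>0$), where $K_\beta$ denotes this common value, has Laplace transform $t\mapsto t^{-\beta}\exp(-z/\sqrt t)\exp(-1/(2t))$, $t>0$.
   Context: $He_k(z)=(-1)^k\varphi^{(k)}(z)/\varphi(z)$ with $\varphi$ the standard normal density (probabilists' Hermite polynomials); ${}_0F_1(b;w)=\sum_{j\ge0}\frac{w^j}{(b)_j\,j!}$ is the confluent hypergeometric limit function. *)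

theory Defs
  imports "HOL-Analysis.Analysis"
begin

definition std_normal_density :: "complex \<Rightarrow> complex" where
  "std_normal_density z = exp (- (z^2) / 2) / complex_of_real (sqrt (2 * pi))"

definition hermite_He :: "nat \<Rightarrow> complex \<Rightarrow> complex" where
  "hermite_He k z = (-1) ^ k * (deriv ^^ k) std_normal_density z / std_normal_density z"

definition hyp0F1 :: "real \<Rightarrow> real \<Rightarrow> real" where
  "hyp0F1 b w = (\<Sum>j. w ^ j / (pochhammer b j * fact j))"

definition lhs_term :: "real \<Rightarrow> real \<Rightarrow> complex \<Rightarrow> nat \<Rightarrow> complex" where
  "lhs_term \<beta> r z k = hermite_He k z * complex_of_real ((- r) ^ k)
      / complex_of_real (Gamma (\<beta> + real k / 2) * fact k)"

definition rhs_term :: "real \<Rightarrow> real \<Rightarrow> complex \<Rightarrow> nat \<Rightarrow> complex" where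
  "rhs_term \<beta> r z k = complex_of_real (hyp0F1 (\<beta> + real k / 2) (- (r^2) / 2))
      * (- (complex_of_real r * z)) ^ k
      / complex_of_real (Gamma (\<beta> + real k / 2) * fact k)"

definition K_beta :: "real \<Rightarrow> real \<Rightarrow> complex \<Rightarrow> complex" where
  "K_beta \<beta> r z = (\<Sum>k. lhs_term \<beta> r z k)"

end

(*
  Both series are rearrangements of one absolutely convergent double series.  Writing the
  probabilists' Hermite polynomial explicitly as
      He_k(z) = sum_j (-1)^j k! / ((k-2j)! j! 2^j) z^(k-2j),
  the series  sum_k He_k(z) w^k c_k / k!  (with bounded weights c_k) becomes the double series
      sum_{m,l} z^m w^(m+2l) c_(m+2l) (-1)^l / (m! l! 2^l),
  which converges absolutely.  Summing it along the diagonals m + 2l = k gives the Hermite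
  series; summing the rows (over l first) gives, for c_n = 1/Gamma(beta + n/2) and w = -r, the
  0F1 series times the terms of the right-hand side, since Gamma(b + l) = (b)_l Gamma(b).

  The Laplace transform is
  computed termwise from  int_0^oo e^(-tx) x^(a-1) dx = Gamma(a) t^(-a):  the weight
  1/Gamma(beta + k/2) cancels, integration and summation are interchanged because the
  integrals of the absolute values of the terms form a convergent series, and the generating
  function at w = -1/sqrt t gives the result.
*)

theory Submission
  imports Defs
begin

text \<open>The number \<open>(2j)! / (j! 2^j)\<close> of perfect matchings of \<open>2j\<close> points; it appears in the
  coefficients of the Hermite polynomials.\<close>

definition pairings :: "nat \<Rightarrow> real" where
  "pairings j = fact (2 * j) / (fact j * 2 ^ j)"

lemma pairings_Suc: "pairings (Suc j) = (2 * real j + 1) * pairings j"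
proof -
  have num: "fact (2 * Suc j) = (2 * real j + 2) * ((2 * real j + 1) * fact (2 * j))"
    unfolding mult_Suc_right add_2_eq_Suc' fact_Suc by (simp add: algebra_simps)
  have den: "fact (Suc j) * 2 ^ Suc j = (2 * real j + 2) * (fact j * 2 ^ j)"
    by (simp add: algebra_simps)
  have "2 * real j + 2 \<noteq> 0"
    by linarith
  then show ?thesis
    unfolding pairings_def num den mult_divide_mult_cancel_left by simp
qed

text \<open>It vanishes automatically for \<open>2j > k\<close>, so sums over \<open>j \<le> k\<close> need no side conditions.\<close>

definition hermite_coeff :: "nat \<Rightarrow> nat \<Rightarrow> real" where
  "hermite_coeff k j = (-1) ^ j * real (k choose (2 * j)) * pairings j"

lemma hermite_coeff_0 [simp]: "hermite_coeff k 0 = 1"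
  by (simp add: hermite_coeff_def pairings_def)

lemma hermite_coeff_eq_0: "k < 2 * j \<Longrightarrow> hermite_coeff k j = 0"
  by (simp add: hermite_coeff_def)

lemma hermite_coeff_closed_form:
  assumes "2 * j \<le> k"
  shows "hermite_coeff k j = (-1) ^ j * fact k / (fact (k - 2 * j) * fact j * 2 ^ j)"
  using assms by (simp add: hermite_coeff_def pairings_def binomial_fact field_simps)

text \<open>Coefficient form of the recurrence \<open>He_(k+1) = z He_k - He_k'\<close>, from Pascal's rule and
  \<open>(k-2i) (k choose 2i) = (2i+1) (k choose 2i+1)\<close>.\<close>

lemma hermite_coeff_Suc:
  "hermite_coeff (Suc k) (Suc i) = hermite_coeff k (Suc i) - hermite_coeff k i * real (k - 2 * i)"
proof -
  have "(k - 2 * i) * (k choose (2 * i)) = (k choose Suc (2 * i)) * Suc (2 * i)"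
    using binomial_absorb_comp[of k "2 * i"] binomial_absorption[of "2 * i" k]
    by (simp add: algebra_simps)
  then have absorb: "real (k - 2 * i) * real (k choose (2 * i))
      = real (k choose Suc (2 * i)) * (2 * real i + 1)"
    by (metis of_nat_mult of_nat_Suc of_nat_numeral add.commute)
  have "hermite_coeff k i * real (k - 2 * i)
      = (-1) ^ i * pairings i * (real (k - 2 * i) * real (k choose (2 * i)))"
    by (simp add: hermite_coeff_def)
  also have "\<dots> = (-1) ^ i * real (k choose Suc (2 * i)) * pairings (Suc i)"
    unfolding absorb pairings_Suc by simp
  finally have "hermite_coeff k i * real (k - 2 * i)
      = (-1) ^ i * real (k choose Suc (2 * i)) * pairings (Suc i)" .
  moreover have "Suc k choose (2 * Suc i) = (k choose Suc (2 * i)) + (k choose (2 * Suc i))"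
    by simp
  ultimately show ?thesis
    unfolding hermite_coeff_def by (simp add: algebra_simps)
qed

definition hermite_poly :: "nat \<Rightarrow> complex \<Rightarrow> complex" where
  "hermite_poly k z = (\<Sum>j\<le>k. of_real (hermite_coeff k j) * z ^ (k - 2 * j))"

definition hermite_poly_deriv :: "nat \<Rightarrow> complex \<Rightarrow> complex" where
  "hermite_poly_deriv k z = (\<Sum>j\<le>k. of_real (hermite_coeff k j) * of_nat (k - 2 * j) * z ^ (k - 2 * j - 1))"

lemma hermite_poly_has_derivative:
  "(hermite_poly k has_field_derivative hermite_poly_deriv k z) (at z)"
  unfolding hermite_poly_def [abs_def] hermite_poly_deriv_def
  by (auto intro!: derivative_eq_intros intro: sum.cong simp: mult_ac)

lemma hermite_poly_0 [simp]: "hermite_poly 0 z = 1"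
  by (simp add: hermite_poly_def)

lemma hermite_poly_Suc: "hermite_poly (Suc k) z = z * hermite_poly k z - hermite_poly_deriv k z"
proof -
  define c where "c = hermite_coeff k"
  define d where "d j = (case j of 0 \<Rightarrow> 0 | Suc i \<Rightarrow> of_real (c i) * of_nat (k - 2 * i) * z ^ (k - 2 * i - 1))"
    for j :: nat
  have termwise: "of_real (hermite_coeff (Suc k) j) * z ^ (Suc k - 2 * j)
      = z * (of_real (c j) * z ^ (k - 2 * j)) - d j" for j
  proof (cases j)
    case (Suc i)
    have "of_real (c (Suc i)) * z ^ (Suc k - 2 * Suc i) = z * (of_real (c (Suc i)) * z ^ (k - 2 * Suc i))"
      by (cases "2 * Suc i \<le> k") (auto simp: c_def hermite_coeff_eq_0 dest!: le_Suc_ex)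
    moreover have "Suc k - 2 * Suc i = k - 2 * i - 1"
      by simp
    ultimately show ?thesis
      using Suc by (simp add: d_def c_def hermite_coeff_Suc algebra_simps)
  qed (simp add: c_def d_def)
  have "hermite_poly (Suc k) z = z * (\<Sum>j\<le>Suc k. of_real (c j) * z ^ (k - 2 * j)) - (\<Sum>j\<le>Suc k. d j)"
    unfolding hermite_poly_def termwise sum_subtractf sum_distrib_left ..
  also have "(\<Sum>j\<le>Suc k. of_real (c j) * z ^ (k - 2 * j)) = hermite_poly k z"
    by (simp add: hermite_poly_def c_def hermite_coeff_eq_0)
  also have "(\<Sum>j\<le>Suc k. d j) = hermite_poly_deriv k z"
    unfolding sum.atMost_Suc_shift by (simp add: d_def hermite_poly_deriv_def c_def)
  finally show ?thesis .
qed

lemma std_normal_density_has_derivative: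
  "(std_normal_density has_field_derivative (- z * std_normal_density z)) (at z)"
  unfolding std_normal_density_def [abs_def]
  by (auto intro!: derivative_eq_intros simp: field_simps)

lemma std_normal_density_nonzero: "std_normal_density z \<noteq> 0"
  by (simp add: std_normal_density_def)

lemma higher_deriv_std_normal_density:
  "(deriv ^^ k) std_normal_density = (\<lambda>z. (-1) ^ k * hermite_poly k z * std_normal_density z)"
proof (induction k)
  case (Suc k)
  show ?case
  proof
    fix z
    have "((\<lambda>z. (-1) ^ k * hermite_poly k z * std_normal_density z) has_field_derivative
        (-1) ^ k * (hermite_poly_deriv k z * std_normal_density z
                    + hermite_poly k z * (- z * std_normal_density z))) (at z)"
      by (auto intro!: derivative_eq_intros hermite_poly_has_derivative
            std_normal_density_has_derivative simp: algebra_simps)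
    then have "deriv (\<lambda>z. (-1) ^ k * hermite_poly k z * std_normal_density z) z
        = (-1) ^ Suc k * hermite_poly (Suc k) z * std_normal_density z"
      by (simp add: DERIV_imp_deriv hermite_poly_Suc algebra_simps)
    then show "(deriv ^^ Suc k) std_normal_density z = (-1) ^ Suc k * hermite_poly (Suc k) z * std_normal_density z"
      using Suc.IH by simp
  qed
qed simp

lemma hermite_He_eq_hermite_poly: "hermite_He k z = hermite_poly k z"
  using std_normal_density_nonzero
  by (simp add: hermite_He_def higher_deriv_std_normal_density field_simps flip: power_mult_distrib)

lemma has_sum_diagonals:
  fixes F :: "nat \<times> nat \<Rightarrow> 'a::banach"
  assumes "(F has_sum S) UNIV"
  shows "(\<lambda>k. \<Sum>j\<le>k div 2. F (k - 2 * j, j)) sums S"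
proof -
  have "((\<lambda>(k, j). F (k - 2 * j, j)) has_sum S) (SIGMA k:UNIV. {..k div 2})"
    using assms
    by (subst has_sum_reindex_bij_witness[where i = "\<lambda>(k, j). (k - 2 * j, j)"
          and j = "\<lambda>(m, j). (m + 2 * j, j)", symmetric]) auto
  then have "((\<lambda>k. \<Sum>j\<le>k div 2. F (k - 2 * j, j)) has_sum S) UNIV"
    by (rule has_sum_SigmaD) (auto intro: has_sum_finiteI)
  then show ?thesis
    by (rule has_sum_imp_sums)
qed

text \<open>Expanding \<open>He_k\<close> in \<open>\<Sum>\<^sub>k He_k(z) w^k c_k / k!\<close> gives the double series
  \<open>\<Sum>\<^sub>m\<^sub>,\<^sub>l z^m w^(m+2l) c_(m+2l) (-1)^l / (m! l! 2^l)\<close>, the common source of both sides of the identity.\<close>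

definition hermite_double_term :: "(nat \<Rightarrow> complex) \<Rightarrow> complex \<Rightarrow> complex \<Rightarrow> nat \<times> nat \<Rightarrow> complex" where
  "hermite_double_term c z w = (\<lambda>(m, l). z ^ m * w ^ (m + 2 * l) * c (m + 2 * l) * (-1) ^ l
                                           / (fact m * fact l * 2 ^ l))"

lemma hermite_series_term_diagonal:
  "hermite_poly k z * w ^ k * c k / fact k = (\<Sum>j\<le>k div 2. hermite_double_term c z w (k - 2 * j, j))"
proof -
  have "hermite_poly k z = (\<Sum>j\<le>k div 2. of_real (hermite_coeff k j) * z ^ (k - 2 * j))"
    unfolding hermite_poly_def by (rule sum.mono_neutral_right) (auto simp: hermite_coeff_eq_0)
  moreover have "of_real (hermite_coeff k j) * z ^ (k - 2 * j) * w ^ k * c k / fact k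
      = hermite_double_term c z w (k - 2 * j, j)" if "j \<le> k div 2" for j
  proof -
    from that have "2 * j \<le> k" by simp
    then show ?thesis
      by (simp add: hermite_coeff_closed_form hermite_double_term_def field_simps)
  qed
  ultimately show ?thesis
    by (simp add: sum_distrib_right sum_divide_distrib)
qed

lemma exp_sums_divide_fact: "(\<lambda>n. x ^ n / fact n) sums exp (x :: 'a :: {banach, real_normed_field})"
  using exp_converges[of x] by (simp add: scaleR_conv_of_real divide_inverse mult.commute)

text \<open>For bounded weights \<open>c\<close> the double series converges absolutely: it is dominated by
  \<open>C e^(|z||w|) e^(|w|^2/2)\<close>.\<close>

lemma hermite_double_term_abs_summable:
  assumes bound: "\<And>n. norm (c n) \<le> C"
  shows "(\<lambda>p. norm (hermite_double_term c z w p)) summable_on UNIV"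
proof -
  define a where "a m = (norm z * norm w) ^ m / fact m" for m
  define b where "b l = (norm w ^ 2 / 2) ^ l / fact l" for l
  have "C \<ge> 0"
    using bound[of 0] norm_ge_zero[of "c 0"] by linarith
  have dominated: "norm (hermite_double_term c z w (m, l)) \<le> C * a m * b l" for m l
  proof -
    have "(norm w ^ l) ^ 2 = (norm w ^ 2) ^ l"
      by (simp flip: power_mult add: mult.commute)
    then have "norm (hermite_double_term c z w (m, l)) = a m * b l * norm (c (m + 2 * l))"
      by (simp add: hermite_double_term_def a_def b_def norm_mult norm_divide norm_power
            power_add power_mult power_mult_distrib power_divide field_simps)
    also have "\<dots> \<le> a m * b l * C"
      using bound by (intro mult_left_mono) (auto simp: a_def b_def)
    finally show ?thesis
      by (simp add: mult_ac)
  qed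
  have row: "((\<lambda>l. C * a m * b l) has_sum (C * a m * exp (norm w ^ 2 / 2))) UNIV" for m
    by (intro has_sum_cmult_right sums_nonneg_imp_has_sum) (auto simp: b_def exp_sums_divide_fact)
  have "summable (\<lambda>m. C * a m * exp (norm w ^ 2 / 2))"
    using exp_sums_divide_fact[of "norm z * norm w"]
    by (intro summable_mult2 summable_mult) (auto simp: a_def sums_iff)
  then have "(\<lambda>m. C * a m * exp (norm w ^ 2 / 2)) summable_on UNIV"
    using \<open>C \<ge> 0\<close> by (subst summable_on_UNIV_nonneg_real_iff) (auto simp: a_def)
  then have "(\<lambda>(m, l). C * a m * b l) summable_on UNIV \<times> UNIV"
    by (intro summable_on_SigmaI[where g = "\<lambda>m. C * a m * exp (norm w ^ 2 / 2)"])
       (use row \<open>C \<ge> 0\<close> in \<open>auto simp: a_def b_def\<close>)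
  then show ?thesis
    unfolding UNIV_Times_UNIV by (rule summable_on_comparison_test) (auto simp: dominated)
qed

lemma hermite_series_sums_double_sum:
  assumes "\<And>n. norm (c n) \<le> C"
  shows "(\<lambda>k. hermite_poly k z * w ^ k * c k / fact k) sums (\<Sum>\<^sub>\<infinity>p. hermite_double_term c z w p)"
proof -
  have "hermite_double_term c z w summable_on UNIV"
    using hermite_double_term_abs_summable[OF assms] by (rule abs_summable_summable)
  then show ?thesis
    unfolding hermite_series_term_diagonal by (intro has_sum_diagonals has_sum_infsum)
qed

lemma hermite_series_abs_summable:
  assumes "\<And>n. norm (c n) \<le> C"
  shows "summable (\<lambda>k. norm (hermite_poly k z * w ^ k * c k / fact k))"
proof -
  let ?T = "hermite_double_term c z w"
  have "summable (\<lambda>k. \<Sum>j\<le>k div 2. norm (?T (k - 2 * j, j)))"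
    using has_sum_diagonals[OF has_sum_infsum[OF hermite_double_term_abs_summable[OF assms]]]
    by (rule sums_summable)
  then show ?thesis
    by (rule summable_comparison_test')
       (simp add: hermite_series_term_diagonal norm_sum del: norm_divide)
qed

lemma hermite_double_term_row_sums:
  assumes "\<And>n. norm (c n) \<le> C"
    and rows: "\<And>m. (\<lambda>l. hermite_double_term c z w (m, l)) sums R m"
  shows "R sums (\<Sum>\<^sub>\<infinity>p. hermite_double_term c z w p)"
proof -
  let ?T = "hermite_double_term c z w"
  have summable: "?T summable_on UNIV"
    using hermite_double_term_abs_summable[OF assms(1)] by (rule abs_summable_summable)
  have row_has_sum: "((\<lambda>l. ?T (m, l)) has_sum R m) UNIV" for m
  proof -
    have "?T summable_on range (Pair m)"
      using summable by (rule summable_on_subset_banach) auto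
    then have "(\<lambda>l. ?T (m, l)) summable_on UNIV"
      by (subst (asm) summable_on_reindex) (auto simp: o_def inj_on_def)
    then obtain S where S: "((\<lambda>l. ?T (m, l)) has_sum S) UNIV"
      by (auto simp: summable_on_def)
    have "S = R m"
      using has_sum_imp_sums[OF S] rows[of m] by (rule sums_unique2)
    with S show ?thesis
      by simp
  qed
  have "(?T has_sum (\<Sum>\<^sub>\<infinity>p. ?T p)) (UNIV \<times> UNIV)"
    using has_sum_infsum[OF summable] by simp
  from has_sum_SigmaD[OF this row_has_sum] show ?thesis
    by (rule has_sum_imp_sums)
qed

text \<open>A crude uniform lower bound for \<open>\<Gamma>\<close> on \<open>(0, \<infinity>)\<close>; it makes the weights
  \<open>1 / \<Gamma>(\<beta> + k/2)\<close> bounded and controls \<open>1 / (b)\<^sub>l\<close>.\<close>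

lemma Gamma_real_ge_one_sixth:
  assumes "x > (0::real)"
  shows "Gamma x \<ge> 1 / 6"
proof -
  have Gamma_2: "Gamma (2::real) = 1"
    using Gamma_fact[of 1] by simp
  have ge_1: "Gamma y \<ge> 1" if "y \<ge> (2::real)" for y
  proof (cases "y = 2")
    case False
    then have "Gamma 2 < Gamma y"
      using that by (intro Gamma_real_strict_mono) auto
    then show ?thesis
      using Gamma_2 by simp
  qed (use Gamma_2 in simp)
  show ?thesis
  proof (cases "x \<ge> 2")
    case False
    have "x \<notin> \<int>\<^sub>\<le>\<^sub>0" "x + 1 \<notin> \<int>\<^sub>\<le>\<^sub>0"
      using assms by (auto elim!: nonpos_Ints_cases)
    then have "Gamma (x + 2) = (x + 1) * x * Gamma x"
      using Gamma_plus1[of "x + 1"] Gamma_plus1[of x] by (simp add: add.assoc mult.assoc)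
    moreover have "Gamma (x + 2) \<ge> 1"
      using ge_1 assms by simp
    moreover have "(x + 1) * x \<le> 6"
      using False assms mult_mono[of "x + 1" 3 x 2] by simp
    then have "(x + 1) * x * Gamma x \<le> 6 * Gamma x"
      using assms by (intro mult_right_mono) simp_all
    ultimately show ?thesis
      by linarith
  qed (use ge_1[of x] in simp)
qed

lemma pochhammer_mult_Gamma:
  assumes "b > (0::real)"
  shows "pochhammer b l * Gamma b = Gamma (b + real l)"
proof -
  have "b \<notin> \<int>\<^sub>\<le>\<^sub>0"
    using assms by (auto elim!: nonpos_Ints_cases)
  then show ?thesis
    using Gamma_real_pos[OF assms] by (simp add: pochhammer_Gamma)
qed

text \<open>The series defining \<open>\<^sub>0F\<^sub>1(b; x)\<close> converges for \<open>b > 0\<close>, being dominated by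
  \<open>6 \<Gamma>(b) e^|x|\<close>.\<close>

definition hyp0F1_term :: "real \<Rightarrow> real \<Rightarrow> nat \<Rightarrow> real" where
  "hyp0F1_term b x l = x ^ l / (pochhammer b l * fact l)"

lemma hyp0F1_sums:
  assumes "b > 0"
  shows "hyp0F1_term b x sums hyp0F1 b x"
proof -
  have bound: "norm (hyp0F1_term b x l) \<le> 6 * Gamma b * (\<bar>x\<bar> ^ l / fact l)" for l
  proof -
    have "pochhammer b l > 0"
      using assms by (intro pochhammer_pos)
    moreover have "pochhammer b l * Gamma b \<ge> 1 / 6"
      using assms Gamma_real_ge_one_sixth[of "b + real l"] by (simp add: pochhammer_mult_Gamma)
    ultimately have "1 / pochhammer b l \<le> 6 * Gamma b"
      by (simp add: field_simps)
    then have "\<bar>x\<bar> ^ l / fact l * (1 / pochhammer b l) \<le> \<bar>x\<bar> ^ l / fact l * (6 * Gamma b)"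
      by (rule mult_left_mono) simp
    moreover have "norm (hyp0F1_term b x l) = \<bar>x\<bar> ^ l / fact l * (1 / pochhammer b l)"
      using \<open>pochhammer b l > 0\<close> by (simp add: hyp0F1_term_def abs_mult power_abs)
    ultimately show ?thesis
      by (simp add: mult_ac)
  qed
  have "summable (\<lambda>l. 6 * Gamma b * (\<bar>x\<bar> ^ l / fact l))"
    using exp_sums_divide_fact[of "\<bar>x\<bar>"] by (intro summable_mult) (simp add: sums_iff)
  then have "summable (hyp0F1_term b x)"
    by (rule summable_comparison_test'[where N = 0]) (use bound in auto)
  then show ?thesis
    unfolding hyp0F1_def hyp0F1_term_def [symmetric] by (rule summable_sums)
qed

definition gamma_weight :: "real \<Rightarrow> nat \<Rightarrow> complex" where
  "gamma_weight \<beta> n = complex_of_real (1 / Gamma (\<beta> + real n / 2))"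

lemma norm_gamma_weight_le:
  assumes "\<beta> > 0"
  shows "norm (gamma_weight \<beta> n) \<le> 6"
proof -
  have "Gamma (\<beta> + real n / 2) \<ge> 1 / 6"
    using assms by (intro Gamma_real_ge_one_sixth) simp
  then have "1 / Gamma (\<beta> + real n / 2) \<le> 6"
    by (simp add: field_simps)
  moreover have "Gamma (\<beta> + real n / 2) > 0"
    using assms by (intro Gamma_real_pos) simp
  ultimately show ?thesis
    unfolding gamma_weight_def norm_of_real by simp
qed

text \<open>With \<open>c = gamma_weight \<beta>\<close> and \<open>w = -r\<close>, row \<open>m\<close> of the double series is the \<open>\<^sub>0F\<^sub>1\<close>
  series with parameter \<open>\<beta> + m/2\<close> times the \<open>m\<close>-th factor of the right-hand side,
  because \<open>\<Gamma>(\<beta> + m/2 + l) = (\<beta> + m/2)\<^sub>l \<Gamma>(\<beta> + m/2)\<close>.\<close>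

lemma hermite_double_term_gamma_weight:
  fixes \<beta> r :: real and m l :: nat
  assumes "\<beta> > 0"
  defines "b \<equiv> \<beta> + real m / 2"
  shows "hermite_double_term (gamma_weight \<beta>) z (- of_real r) (m, l)
    = of_real (hyp0F1_term b (- (r ^ 2) / 2) l)
      * ((- (of_real r * z)) ^ m / of_real (Gamma b * fact m))"
proof -
  define P where "P = complex_of_real (pochhammer b l)"
  define G where "G = complex_of_real (Gamma b)"
  have "b > 0"
    using assms by simp
  then have "P \<noteq> 0" "G \<noteq> 0"
    by (simp_all add: P_def G_def pochhammer_pos less_imp_neq [symmetric])
  have weight: "gamma_weight \<beta> (m + 2 * l) = 1 / (P * G)"
    using pochhammer_mult_Gamma[OF \<open>b > 0\<close>, of l]
    by (simp add: gamma_weight_def P_def G_def b_def field_simps flip: of_real_mult)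
  have hyp: "of_real (hyp0F1_term b (- (r ^ 2) / 2) l)
      = (-1) ^ l * (of_real r ^ 2) ^ l / (2 ^ l * (P * fact l))"
  proof -
    have "(- (r ^ 2) / 2) ^ l = (-1) ^ l * (r ^ 2) ^ l / 2 ^ l"
      by (simp only: power_divide power_minus[of "r ^ 2" l])
    then show ?thesis
      by (simp add: hyp0F1_term_def P_def mult_ac)
  qed
  have power_split: "(- complex_of_real r) ^ (m + 2 * l) = (- of_real r) ^ m * (of_real r ^ 2) ^ l"
    by (simp add: power_add power_mult)
  have power_distrib: "(- (of_real r * z)) ^ m = (- of_real r) ^ m * z ^ m"
    by (simp only: minus_mult_left power_mult_distrib)
  show ?thesis
    unfolding hermite_double_term_def prod.case weight hyp power_split power_distrib of_real_mult
      G_def [symmetric] using \<open>P \<noteq> 0\<close> \<open>G \<noteq> 0\<close> by (simp add: field_simps)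
qed

lemma lhs_term_eq_hermite_series:
  "lhs_term \<beta> r z = (\<lambda>k. hermite_poly k z * (- of_real r) ^ k * gamma_weight \<beta> k / fact k)"
  by (simp add: lhs_term_def gamma_weight_def hermite_He_eq_hermite_poly field_simps fun_eq_iff)

lemma kernel_series_common_sum:
  fixes \<beta> r :: real and z :: complex
  assumes "\<beta> > 0"
  defines "S \<equiv> \<Sum>\<^sub>\<infinity>p. hermite_double_term (gamma_weight \<beta>) z (- of_real r) p"
  shows "lhs_term \<beta> r z sums S" and "rhs_term \<beta> r z sums S"
proof -
  note bound = norm_gamma_weight_le[OF assms(1)]
  show "lhs_term \<beta> r z sums S"
    unfolding lhs_term_eq_hermite_series S_def by (rule hermite_series_sums_double_sum[OF bound])
  show "rhs_term \<beta> r z sums S"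
    unfolding S_def
  proof (rule hermite_double_term_row_sums[OF bound])
    fix m :: nat
    define b where "b = \<beta> + real m / 2"
    have "(\<lambda>l. of_real (hyp0F1_term b (- (r ^ 2) / 2) l)) sums complex_of_real (hyp0F1 b (- (r ^ 2) / 2))"
      using hyp0F1_sums[of b] assms(1) by (simp add: b_def sums_of_real_iff)
    then show "(\<lambda>l. hermite_double_term (gamma_weight \<beta>) z (- of_real r) (m, l)) sums rhs_term \<beta> r z m"
      unfolding hermite_double_term_gamma_weight[OF assms(1)] rhs_term_def b_def [symmetric]
      by (metis sums_mult2 times_divide_eq_right)
  qed
qed

lemma lhs_term_abs_summable:
  assumes "\<beta> > 0"
  shows "summable (\<lambda>k. norm (lhs_term \<beta> r z k))"
  unfolding lhs_term_eq_hermite_series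
  by (rule hermite_series_abs_summable[OF norm_gamma_weight_le[OF assms]])

text \<open>Laplace transform of a power: \<open>\<integral>\<^sub>0\<^sup>\<infinity> e^(-tx) x^(a-1) dx = \<Gamma>(a) t^(-a)\<close>, by rescaling
  Euler's integral.\<close>

lemma laplace_transform_power:
  fixes a t :: real
  assumes a: "a > 0" and t: "t > 0"
  shows "has_bochner_integral lebesgue (\<lambda>x. indicator {0<..} x * (exp (- t * x) * x powr (a - 1)))
           (Gamma a * t powr (- a))"
proof -
  define f where "f u = u powr (a - 1) / exp u" for u :: real
  have Gamma_integral: "(f has_integral Gamma a) {0..}"
    unfolding f_def by (rule Gamma_integral_real[OF a])
  then have f_integrable: "f absolutely_integrable_on {0..}"
    by (intro nonnegative_absolutely_integrable_1) (auto simp: f_def integrable_on_def)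
  then have "(LINT x:{0..}|lebesgue. f x) = Gamma a"
    using Gamma_integral by (simp add: set_lebesgue_integral_eq_integral integral_unique)
  with f_integrable have "has_bochner_integral lebesgue (\<lambda>x. indicator {0..} x *\<^sub>R f x) (Gamma a)"
    by (simp add: set_integrable_def set_lebesgue_integral_def has_bochner_integral_iff)
  then have "has_bochner_integral lebesgue
      (\<lambda>x. indicator {0..} (0 + t * x) *\<^sub>R f (0 + t * x)) (Gamma a /\<^sub>R \<bar>t\<bar>)"
    using t by (subst (asm) has_bochner_integral_lebesgue_real_affine_iff[where c = t and t = 0]) auto
  moreover have "indicator {0..} (0 + t * x) *\<^sub>R f (0 + t * x)
      = t powr (a - 1) * (indicator {0<..} x * (exp (- t * x) * x powr (a - 1)))" for x
    using t by (cases x "0 :: real" rule: linorder_cases)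
      (simp_all add: f_def powr_mult exp_minus field_simps indicator_def mult_pos_neg not_le)
  ultimately have "has_bochner_integral lebesgue
      (\<lambda>x. t powr (1 - a) * (t powr (a - 1) * (indicator {0<..} x * (exp (- t * x) * x powr (a - 1)))))
      (t powr (1 - a) * (Gamma a / t))"
    using t by (intro has_bochner_integral_mult_right) (simp add: divide_inverse mult.commute)
  moreover have "t powr (1 - a) * (t powr (a - 1) * y) = y" for y
    using t by (simp flip: mult.assoc powr_add)
  moreover have "t powr (1 - a) * (Gamma a / t) = Gamma a * t powr (- a)"
    using t by (simp add: powr_diff powr_minus field_simps)
  ultimately show ?thesis
    by simp
qed

text \<open>Generating function \<open>\<Sum>\<^sub>k He_k(z) w^k / k! = e^(zw) e^(-w^2/2)\<close>, from the double series with
  constant weights.\<close>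

lemma hermite_generating_function:
  "(\<lambda>k. hermite_poly k z * w ^ k / fact k) sums (exp (z * w) * exp (- (w ^ 2) / 2))"
proof -
  let ?T = "hermite_double_term (\<lambda>_. 1) z w"
  have bound: "norm ((\<lambda>_. 1 :: complex) n) \<le> 1" for n
    by simp
  have row: "(\<lambda>l. ?T (m, l)) sums ((z * w) ^ m / fact m * exp (- (w ^ 2) / 2))" for m
  proof -
    have row_term: "?T (m, l) = (z * w) ^ m / fact m * ((- (w ^ 2) / 2) ^ l / fact l)" for l
    proof -
      have "(- (w ^ 2) / 2) ^ l = (-1) ^ l * (w ^ 2) ^ l / 2 ^ l"
        by (simp only: power_divide power_minus[of "w ^ 2" l])
      moreover have "(w ^ l) ^ 2 = (w ^ 2) ^ l"
        by (simp flip: power_mult add: mult.commute)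
      ultimately show ?thesis
        by (simp add: hermite_double_term_def power_add power_mult power_mult_distrib field_simps)
    qed
    show ?thesis
      unfolding row_term by (rule sums_mult[OF exp_sums_divide_fact])
  qed
  have "(\<lambda>m. (z * w) ^ m / fact m * exp (- (w ^ 2) / 2)) sums (exp (z * w) * exp (- (w ^ 2) / 2))"
    by (rule sums_mult2[OF exp_sums_divide_fact])
  moreover note hermite_double_term_row_sums[OF bound row]
  ultimately have "(\<Sum>\<^sub>\<infinity>p. ?T p) = exp (z * w) * exp (- (w ^ 2) / 2)"
    by (rule sums_unique2[symmetric])
  with hermite_series_sums_double_sum[OF bound, of z w] show ?thesis
    by simp
qed

text \<open>Since \<open>(\<surd>x)^k = x^(k/2)\<close>,
  it is a constant multiple of \<open>e^(-tx) x^(\<beta> + k/2 - 1)\<close>.\<close>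

definition lhs_laplace_integrand :: "real \<Rightarrow> real \<Rightarrow> complex \<Rightarrow> nat \<Rightarrow> real \<Rightarrow> complex" where
  "lhs_laplace_integrand \<beta> t z k x =
     indicator {0<..} x *\<^sub>R (complex_of_real (exp (- t * x) * x powr (\<beta> - 1)) * lhs_term \<beta> (sqrt x) z k)"

lemma lhs_laplace_integrand_eq:
  "lhs_laplace_integrand \<beta> t z k x
     = hermite_poly k z * (-1) ^ k * gamma_weight \<beta> k / fact k
       * of_real (indicator {0<..} x * (exp (- t * x) * x powr (\<beta> + real k / 2 - 1)))"
proof (cases "x > 0")
  case True
  have "sqrt x ^ k = x powr (real k / 2)"
    using True by (simp add: powr_half_sqrt [symmetric] powr_power)
  then have "(- complex_of_real (sqrt x)) ^ k = (-1) ^ k * of_real (x powr (real k / 2))"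
    by (simp add: power_minus [of "complex_of_real (sqrt x)" k] flip: of_real_power)
  moreover have "x powr (\<beta> - 1) * x powr (real k / 2) = x powr (\<beta> + real k / 2 - 1)"
    by (simp add: powr_add [symmetric] algebra_simps)
  ultimately show ?thesis
    using True by (simp add: lhs_laplace_integrand_def lhs_term_eq_hermite_series field_simps
        flip: of_real_mult)
qed (simp add: lhs_laplace_integrand_def)

lemma gamma_weight_laplace_factor:
  assumes "\<beta> > 0" and "t > 0"
  shows "gamma_weight \<beta> k * of_real (Gamma (\<beta> + real k / 2) * t powr (- (\<beta> + real k / 2)))
           = of_real (t powr (- \<beta>) * (1 / sqrt t) ^ k)"
proof -
  have "(1 / sqrt t) ^ k = t powr (real k * (- 1 / 2))"
    using assms by (simp add: powr_half_sqrt [symmetric] powr_minus_divide [symmetric] powr_power)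
  then have "t powr (- (\<beta> + real k / 2)) = t powr (- \<beta>) * (1 / sqrt t) ^ k"
    by (simp add: powr_add [symmetric] algebra_simps)
  moreover have "Gamma (\<beta> + real k / 2) > 0"
    using assms by (intro Gamma_real_pos) simp
  ultimately have "1 / Gamma (\<beta> + real k / 2) * (Gamma (\<beta> + real k / 2) * t powr (- (\<beta> + real k / 2)))
      = t powr (- \<beta>) * (1 / sqrt t) ^ k"
    by simp
  then show ?thesis
    unfolding gamma_weight_def of_real_mult [symmetric] by (rule arg_cong)
qed

lemma lhs_laplace_integrand_integral:
  assumes "\<beta> > 0" and "t > 0"
  defines "u \<equiv> complex_of_real (1 / sqrt t)"
  shows "has_bochner_integral lebesgue (lhs_laplace_integrand \<beta> t z k)
           (of_real (t powr (- \<beta>)) * (hermite_poly k z * (- u) ^ k / fact k))"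
    and "has_bochner_integral lebesgue (\<lambda>x. norm (lhs_laplace_integrand \<beta> t z k x))
           (t powr (- \<beta>) * norm (hermite_poly k z * u ^ k / fact k))"
proof -
  define a where "a = \<beta> + real k / 2"
  define f where "f x = indicator {0<..} x * (exp (- t * x) * x powr (a - 1))" for x
  define Q where "Q = hermite_poly k z * (-1) ^ k * gamma_weight \<beta> k / fact k"
  have "a > 0"
    using assms by (simp add: a_def)
  note power_integral = laplace_transform_power[OF \<open>a > 0\<close> \<open>t > 0\<close>, folded f_def]
  have integrand: "lhs_laplace_integrand \<beta> t z k = (\<lambda>x. Q * of_real (f x))"
    by (simp add: fun_eq_iff lhs_laplace_integrand_eq Q_def f_def a_def)
  have norm_integrand: "(\<lambda>x. norm (lhs_laplace_integrand \<beta> t z k x)) = (\<lambda>x. norm Q * f x)"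
    by (simp add: fun_eq_iff integrand norm_mult f_def indicator_def)
  have "Q * of_real (Gamma a * t powr (- a))
      = hermite_poly k z * (-1) ^ k / fact k * (gamma_weight \<beta> k * of_real (Gamma a * t powr (- a)))"
    by (simp add: Q_def divide_inverse mult_ac)
  also have "\<dots> = hermite_poly k z * (-1) ^ k / fact k * of_real (t powr (- \<beta>) * (1 / sqrt t) ^ k)"
    unfolding a_def gamma_weight_laplace_factor[OF assms(1,2)] ..
  also have "\<dots> = of_real (t powr (- \<beta>)) * (hermite_poly k z * (- u) ^ k / fact k)"
    unfolding u_def power_minus [of "complex_of_real (1 / sqrt t)"] of_real_mult of_real_power
    by (simp add: divide_inverse mult_ac)
  finally have integral_value: "Q * of_real (Gamma a * t powr (- a))
      = of_real (t powr (- \<beta>)) * (hermite_poly k z * (- u) ^ k / fact k)" .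
  then show "has_bochner_integral lebesgue (lhs_laplace_integrand \<beta> t z k)
      (of_real (t powr (- \<beta>)) * (hermite_poly k z * (- u) ^ k / fact k))"
    unfolding integrand
    by (metis has_bochner_integral_mult_right has_bochner_integral_of_real power_integral)
  have "norm Q * (Gamma a * t powr (- a)) = norm (Q * of_real (Gamma a * t powr (- a)))"
    using Gamma_real_pos[OF \<open>a > 0\<close>] by (simp add: norm_mult)
  also have "\<dots> = t powr (- \<beta>) * norm (hermite_poly k z * u ^ k / fact k)"
    unfolding integral_value by (simp add: u_def norm_mult norm_divide norm_power)
  finally show "has_bochner_integral lebesgue (\<lambda>x. norm (lhs_laplace_integrand \<beta> t z k x))
      (t powr (- \<beta>) * norm (hermite_poly k z * u ^ k / fact k))"
    unfolding norm_integrand by (metis has_bochner_integral_mult_right power_integral)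
qed

lemma K_beta_laplace_integrand_eq_suminf:
  assumes "\<beta> > 0"
  shows "indicator {0<..} x *\<^sub>R
           (complex_of_real (exp (- t * x) * x powr (\<beta> - 1)) * K_beta \<beta> (sqrt x) z)
         = (\<Sum>k. lhs_laplace_integrand \<beta> t z k x)"
proof -
  define c where "c = complex_of_real (exp (- t * x) * x powr (\<beta> - 1))"
  have "summable (lhs_term \<beta> (sqrt x) z)"
    using kernel_series_common_sum(1)[OF assms] by (rule sums_summable)
  then have "(\<Sum>k. c * lhs_term \<beta> (sqrt x) z k) = c * K_beta \<beta> (sqrt x) z"
    unfolding K_beta_def by (rule suminf_mult)
  moreover have "(\<Sum>k. lhs_laplace_integrand \<beta> t z k x)
      = indicator {0<..} x *\<^sub>R (\<Sum>k. c * lhs_term \<beta> (sqrt x) z k)"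
    unfolding lhs_laplace_integrand_def c_def [symmetric]
    by (rule suminf_scaleR_right [symmetric]) (intro summable_mult \<open>summable (lhs_term \<beta> (sqrt x) z)\<close>)
  ultimately show ?thesis
    by (simp add: c_def)
qed

text \<open>The termwise integrals sum, by the generating function at \<open>w = -1/\<surd>t\<close>, to the claimed
  Laplace transform.\<close>

lemma lhs_laplace_integrals_sums:
  assumes "\<beta> > 0" and "t > 0"
  shows "(\<lambda>k. integral\<^sup>L lebesgue (lhs_laplace_integrand \<beta> t z k))
           sums (of_real (t powr (- \<beta>)) * exp (- z / of_real (sqrt t)) * of_real (exp (- 1 / (2 * t))))"
proof -
  define u where "u = complex_of_real (1 / sqrt t)"
  have integral_eq: "integral\<^sup>L lebesgue (lhs_laplace_integrand \<beta> t z k)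
      = of_real (t powr (- \<beta>)) * (hermite_poly k z * (- u) ^ k / fact k)" for k
    unfolding u_def by (rule has_bochner_integral_integral_eq[OF lhs_laplace_integrand_integral(1)[OF assms]])
  have exp_linear: "exp (z * - u) = exp (- z / of_real (sqrt t))"
    by (simp add: u_def)
  have exp_quadratic: "exp (- ((- u) ^ 2) / 2) = of_real (exp (- 1 / (2 * t)))"
    using assms by (simp add: u_def power_divide field_simps flip: exp_of_real of_real_power)
  show ?thesis
    unfolding integral_eq mult.assoc exp_linear [symmetric] exp_quadratic [symmetric]
    by (rule sums_mult[OF hermite_generating_function])
qed

text \<open>Since the integrals of the absolute values of the terms are summable, integration and
  summation may be interchanged.\<close>

lemma K_beta_laplace_lebesgue:
  assumes "\<beta> > 0" and "t > 0"
  shows "has_bochner_integral lebesgue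
           (\<lambda>x. indicator {0<..} x *\<^sub>R
              (complex_of_real (exp (- t * x) * x powr (\<beta> - 1)) * K_beta \<beta> (sqrt x) z))
           (of_real (t powr (- \<beta>)) * exp (- z / of_real (sqrt t)) * of_real (exp (- 1 / (2 * t))))"
proof -
  let ?g = "lhs_laplace_integrand \<beta> t z"
  note term_integral = lhs_laplace_integrand_integral[OF assms, of z]
  have integrable: "integrable lebesgue (?g k)" for k
    using term_integral(1) by (rule integrable.intros)
  have norm_summable: "summable (\<lambda>k. integral\<^sup>L lebesgue (\<lambda>x. norm (?g k x)))"
    unfolding has_bochner_integral_integral_eq[OF term_integral(2)]
    using hermite_series_abs_summable[where c = "\<lambda>_. 1" and C = 1]
    by (intro summable_mult) simp
  have "summable (\<lambda>k. norm (?g k x))" for x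
    using summable_mult[OF lhs_term_abs_summable[OF assms(1)], of "\<bar>exp (- t * x) * x powr (\<beta> - 1)\<bar>"]
    by (simp add: lhs_laplace_integrand_def norm_mult indicator_def)
  then have pointwise: "AE x in lebesgue. summable (\<lambda>k. norm (?g k x))"
    by simp
  have "(\<lambda>x. indicator {0<..} x *\<^sub>R
      (complex_of_real (exp (- t * x) * x powr (\<beta> - 1)) * K_beta \<beta> (sqrt x) z))
      = (\<lambda>x. \<Sum>k. ?g k x)"
    using K_beta_laplace_integrand_eq_suminf[OF assms(1)] by (rule ext)
  then show ?thesis
    using lhs_laplace_integrals_sums[OF assms, of z]
      integrable_suminf[OF integrable pointwise norm_summable]
      sums_integral[OF integrable pointwise norm_summable]
    by (simp add: has_bochner_integral_iff sums_unique2)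
qed

lemma K_beta_laplace_transform:
  fixes \<beta> t :: real and z :: complex
  assumes "\<beta> > 0" and "t > 0"
  defines "F \<equiv> \<lambda>x. complex_of_real (exp (- t * x) * x powr (\<beta> - 1)) * K_beta \<beta> (sqrt x) z"
  shows "F absolutely_integrable_on {0<..} \<and> integral {0<..} F
           = of_real (t powr (- \<beta>)) * exp (- z / of_real (sqrt t)) * of_real (exp (- 1 / (2 * t)))"
proof -
  have lebesgue_integral: "has_bochner_integral lebesgue (\<lambda>x. indicator {0<..} x *\<^sub>R F x)
      (of_real (t powr (- \<beta>)) * exp (- z / of_real (sqrt t)) * of_real (exp (- 1 / (2 * t))))"
    unfolding F_def by (rule K_beta_laplace_lebesgue[OF assms(1,2)])
  then have integrable: "F absolutely_integrable_on {0<..}"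
    unfolding set_integrable_def by (rule integrable.intros)
  have "integral {0<..} F = set_lebesgue_integral lebesgue {0<..} F"
    by (rule set_lebesgue_integral_eq_integral(2)[OF integrable, symmetric])
  with integrable lebesgue_integral show ?thesis
    by (simp add: set_lebesgue_integral_def has_bochner_integral_integral_eq)
qed

theorem mainTheorem3:
  fixes \<beta> :: real and z :: complex
  assumes "\<beta> > 0"
  shows "(\<forall>r\<ge>0. summable (lhs_term \<beta> r z) \<and> summable (rhs_term \<beta> r z)
             \<and> (\<Sum>k. lhs_term \<beta> r z k) = (\<Sum>k. rhs_term \<beta> r z k))
       \<and> (\<forall>t>0.
           (\<lambda>x. complex_of_real (exp (- t * x) * x powr (\<beta> - 1)) * K_beta \<beta> (sqrt x) z)
             absolutely_integrable_on {0<..}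
           \<and> integral {0<..}
               (\<lambda>x. complex_of_real (exp (- t * x) * x powr (\<beta> - 1)) * K_beta \<beta> (sqrt x) z)
             = complex_of_real (t powr (- \<beta>)) * exp (- z / complex_of_real (sqrt t))
               * complex_of_real (exp (- 1 / (2 * t))))"
proof -
  have "summable (lhs_term \<beta> r z) \<and> summable (rhs_term \<beta> r z)
      \<and> (\<Sum>k. lhs_term \<beta> r z k) = (\<Sum>k. rhs_term \<beta> r z k)" for r
    using kernel_series_common_sum[OF assms, of r z] by (simp add: sums_iff)
  moreover note K_beta_laplace_transform[OF assms]
  ultimately show ?thesis
    by simp
qed

end
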